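(* Let $L\ge1$, let $\sigma$ be $L$-periodic, $\theta$ an affine permutation of period $L$, and $\mu$ a Maya diagram of charge zero (the combined Maya diagram of the Young diagrams on the $L$ top/bottom external legs). Let $M\ge1$, $\sigma'$ ($ML$-periodic) and $\theta'$ (affine permutation of period $ML$) satisfy $\sigma\circ\theta=\sigma'\circ\theta'$ and $\mu\circ\theta=\emptyset\circ\theta'$ (such data exist). Then, with $\nu=(\emptyset,\emptyset)$ the pair of empty Young diagrams, $$F^{(L)}_{(\sigma,\theta;\mu,(\emptyset,\emptyset))}(u_0,\dots,u_{L-1})=F^{(ML)}_{(\sigma',\theta';\emptyset,(\emptyset,\emptyset))}(u'_0,\dots,u'_{ML-1})\Big|_{u'_{i+kL}=u_i\ (0\le i\le L-1,\ 0\le k\le M-1)}.$$ That is, the non-commutative topological vertex of the generalized conifold with $L-1$ compact curves and boundary data $\mu$ equals the closed BPS (crystal) partition function $\mathcal{C}_{(\sigma',\theta';\emptyset,(\emptyset,\emptyset))}$ of its $\mathbb{Z}_M$ orbifold under the specialization $q^\theta_i=q'^{\theta'}_i=q'^{\theta'}_{i+L}=\cdots=q'^{\theta'}_{i+(M-1)L}$.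
   Context: $\mathbb{Z}_h=\mathbb{Z}+\tfrac12$. For $K\ge1$, an affine permutation of period $K$ is a bijection $\theta:\mathbb{Z}_h\to\mathbb{Z}_h$ with $\theta(h+K)=\theta(h)+K$ and $\sum_{i=1}^K\theta(i-\frac12)=\sum_{i=1}^K(i-\frac12)$; a map $f:\mathbb{Z}_h\to\{\pm1\}$ is $K$-periodic if $f(h+K)=f(h)$. A Maya diagram is a map $\lambda:\mathbb{Z}_h\to\{\pm1\}$ equal to $-1$ for $h\ll0$ and $+1$ for $h\gg0$; its charge is $\#\{h>0:\lambda(h)=-1\}-\#\{h<0:\lambda(h)=+1\}$; $\emptyset$ denotes the Maya diagram with $\emptyset(h)=-1$ for $h<0$, $+1$ for $h>0$ (and also the empty Young diagram). A Young diagram $\lambda=(\lambda_1\ge\lambda_2\ge\cdots)$ is identified with its box set $\{(x,y)\in\mathbb{Z}_{\ge0}^2: x<\lambda_{y+1}\}$; $|\lambda|$ is its number of boxes. Write $\lambda\overset{+}{\succ}\lambda'$ if $\lambda_1\ge\lambda'_1\ge\lambda_2\ge\lambda'_2\ge\cdots$ and $\lambda\overset{-}{\succ}\lambda'$ if the same interlacing holds for the transposes. Fix $K\ge1$, a $K$-periodic $\sigma$, an affine permutation $\theta$ of period $K$, a Maya diagram $\mu$ and Young diagrams $\nu=(\nu_+,\nu_-)$. A transition of type $(\sigma,\theta;\mu,\nu)$ is a map $\mathcal{V}$ from $\mathbb{Z}$ to Young diagrams such that $\mathcal{V}(n)=\nu_-$ for $n\ll0$, $\mathcal{V}(n)=\nu_+$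 for $n\gg0$, and for every $h\in\mathbb{Z}_h$, writing $\epsilon=\mu(\theta(h))$ and $s=\sigma(\theta(h))$, one has $\mathcal{V}(h-\epsilon/2)\overset{s}{\succ}\mathcal{V}(h+\epsilon/2)$. (It is a known fact, assumed here, that there is a unique minimal transition $\mathcal{V}_{\min}$ with $\mathcal{V}_{\min}(n)\subseteq\mathcal{V}(n)$ for all $n$ and all transitions $\mathcal{V}$.) For a transition $\mathcal{V}$ and $0\le i\le K-1$ set $w_i(\mathcal{V})=\sum_{n\equiv i\ (\mathrm{mod}\ K)}(|\mathcal{V}(n)|-|\mathcal{V}_{\min}(n)|)$, and define $F^{(K)}_{(\sigma,\theta;\mu,\nu)}(u_0,\dots,u_{K-1})=\sum_{\mathcal{V}}\prod_{i=0}^{K-1}u_i^{w_i(\mathcal{V})}$, summed over all transitions of type $(\sigma,\theta;\mu,\nu)$. The non-commutative topological vertex is $\mathcal{C}_{(\sigma,\theta;\mu,\nu)}(q_0,\dots,q_{K-1})=F^{(K)}_{(\sigma,\theta;\mu,\nu)}(q^\theta_0,\dots,q^\theta_{K-1})$, where, with $q_{j+K}=q_j$, $a=\theta^{-1}(i-\frac12)$, $b=\theta^{-1}(i+\frac12)$: $q^\theta_i=q_{a+1/2}\cdots q_{b-1/2}$ if $a<b$, and $q^\theta_i=q_{a-1/2}^{-1}\cdots q_{b+1/2}^{-1}$ if $a>b$. *)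

theory Defs
  imports Main "HOL-Library.Extended_Nat"
begin

text \<open>A half-integer h in Z+1/2 is encoded by the integer j = h - 1/2.
 Signs (+1/-1) are integers. A Young diagram is a weakly decreasing function
 nat => nat (row lengths lambda_1, lambda_2, ... indexed from 0) with finite support.\<close>

type_synonym young = "nat \<Rightarrow> nat"

definition young :: "young \<Rightarrow> bool" where
  "young lm \<longleftrightarrow> (\<forall>i. lm (Suc i) \<le> lm i) \<and> finite {i. lm i \<noteq> 0}"

definition empty_young :: young where
  "empty_young = (\<lambda>_. 0)"

definition ysize :: "young \<Rightarrow> nat" where
  "ysize lm = (\<Sum>i\<in>{i. lm i \<noteq> 0}. lm i)"

definition ytranspose :: "young \<Rightarrow> young" where
  "ytranspose lm = (\<lambda>j. card {i. j < lm i})"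

definition ysubset :: "young \<Rightarrow> young \<Rightarrow> bool" where
  "ysubset lm lm' \<longleftrightarrow> (\<forall>i. lm i \<le> lm' i)"

definition interlace :: "young \<Rightarrow> young \<Rightarrow> bool" where
  "interlace lm lm' \<longleftrightarrow> (\<forall>i. lm' i \<le> lm i \<and> lm (Suc i) \<le> lm' i)"

definition succ_s :: "int \<Rightarrow> young \<Rightarrow> young \<Rightarrow> bool" where
  "succ_s s lm lm' \<longleftrightarrow>
     (if s = 1 then interlace lm lm' else interlace (ytranspose lm) (ytranspose lm'))"

definition sign_map :: "(int \<Rightarrow> int) \<Rightarrow> bool" where
  "sign_map f \<longleftrightarrow> (\<forall>j. f j = 1 \<or> f j = -1)"

definition periodic :: "nat \<Rightarrow> (int \<Rightarrow> int) \<Rightarrow> bool" where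
  "periodic K f \<longleftrightarrow> sign_map f \<and> (\<forall>j. f (j + int K) = f j)"

text \<open>affine permutation of period K; theta(i - 1/2), i=1..K, corresponds to j = 0..K-1\<close>
definition affine_perm :: "nat \<Rightarrow> (int \<Rightarrow> int) \<Rightarrow> bool" where
  "affine_perm K \<theta> \<longleftrightarrow> bij \<theta> \<and> (\<forall>j. \<theta> (j + int K) = \<theta> j + int K)
     \<and> (\<Sum>j\<in>{0..<int K}. \<theta> j) = (\<Sum>j\<in>{0..<int K}. j)"

definition maya :: "(int \<Rightarrow> int) \<Rightarrow> bool" where
  "maya lm \<longleftrightarrow> sign_map lm \<and> (\<exists>N. \<forall>j. j < -N \<longrightarrow> lm j = -1) \<and> (\<exists>N. \<forall>j. j > N \<longrightarrow> lm j = 1)"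

text \<open>h > 0 iff j >= 0, h < 0 iff j < 0\<close>
definition charge :: "(int \<Rightarrow> int) \<Rightarrow> int" where
  "charge lm = int (card {j. 0 \<le> j \<and> lm j = -1}) - int (card {j. j < 0 \<and> lm j = 1})"

definition empty_maya :: "int \<Rightarrow> int" where
  "empty_maya j = (if j < 0 then -1 else 1)"

text \<open>Transition of type (sigma, theta; mu, (nu_plus, nu_minus)).
 For h = j + 1/2: h - eps/2 and h + eps/2 are j, j+1 if eps = 1 and j+1, j if eps = -1.\<close>
definition transition ::
  "(int \<Rightarrow> int) \<Rightarrow> (int \<Rightarrow> int) \<Rightarrow> (int \<Rightarrow> int) \<Rightarrow> young \<Rightarrow> young \<Rightarrow> (int \<Rightarrow> young) \<Rightarrow> bool" where
  "transition \<sigma> \<theta> \<mu> \<nu>p \<nu>m V \<longleftrightarrow>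
     (\<forall>n. young (V n)) \<and>
     (\<exists>N. \<forall>n. n < N \<longrightarrow> V n = \<nu>m) \<and>
     (\<exists>N. \<forall>n. n > N \<longrightarrow> V n = \<nu>p) \<and>
     (\<forall>j. let \<epsilon> = \<mu> (\<theta> j); s = \<sigma> (\<theta> j) in
        (if \<epsilon> = 1 then succ_s s (V j) (V (j + 1)) else succ_s s (V (j + 1)) (V j)))"

text \<open>The unique minimal transition (its existence and uniqueness is a known fact assumed in the paper).\<close>
definition Vmin ::
  "(int \<Rightarrow> int) \<Rightarrow> (int \<Rightarrow> int) \<Rightarrow> (int \<Rightarrow> int) \<Rightarrow> young \<Rightarrow> young \<Rightarrow> (int \<Rightarrow> young)" where
  "Vmin \<sigma> \<theta> \<mu> \<nu>p \<nu>m = (THE V. transition \<sigma> \<theta> \<mu> \<nu>p \<nu>m V \<and>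
      (\<forall>W. transition \<sigma> \<theta> \<mu> \<nu>p \<nu>m W \<longrightarrow> (\<forall>n. ysubset (V n) (W n))))"

text \<open>w_i(V) = sum over n = i mod K of |V(n)| - |Vmin(n)| (only finitely many nonzero terms)\<close>
definition weight ::
  "nat \<Rightarrow> (int \<Rightarrow> int) \<Rightarrow> (int \<Rightarrow> int) \<Rightarrow> (int \<Rightarrow> int) \<Rightarrow> young \<Rightarrow> young \<Rightarrow> (int \<Rightarrow> young) \<Rightarrow> nat \<Rightarrow> nat" where
  "weight K \<sigma> \<theta> \<mu> \<nu>p \<nu>m V i =
     (\<Sum>n\<in>{n. n mod int K = int i \<and> V n \<noteq> Vmin \<sigma> \<theta> \<mu> \<nu>p \<nu>m n}.
        ysize (V n) - ysize (Vmin \<sigma> \<theta> \<mu> \<nu>p \<nu>m n))"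

text \<open>Cardinality in N \<union> {\<infinity>}: coefficients of the generating functions.\<close>
definition ecard :: "'a set \<Rightarrow> enat" where
  "ecard A = (if finite A then enat (card A) else \<infinity>)"

text \<open>Coefficient of the monomial prod_{i<K} u_i^(w i) in F^(K)_(sigma,theta;mu,nu)(u_0..u_{K-1}).\<close>
definition F_coeff ::
  "nat \<Rightarrow> (int \<Rightarrow> int) \<Rightarrow> (int \<Rightarrow> int) \<Rightarrow> (int \<Rightarrow> int) \<Rightarrow> young \<Rightarrow> young \<Rightarrow> (nat \<Rightarrow> nat) \<Rightarrow> enat" where
  "F_coeff K \<sigma> \<theta> \<mu> \<nu>p \<nu>m w =
     ecard {V. transition \<sigma> \<theta> \<mu> \<nu>p \<nu>m V \<and> (\<forall>i<K. weight K \<sigma> \<theta> \<mu> \<nu>p \<nu>m V i = w i)}"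

text \<open>Coefficient of prod_{i<L} u_i^(w i) in F^(M L)_(sigma,theta;mu,nu)(u'_0..u'_{ML-1}) after the
 specialization u'_{i+kL} = u_i (0 <= i < L, 0 <= k < M).\<close>
definition F_coeff_spec ::
  "nat \<Rightarrow> nat \<Rightarrow> (int \<Rightarrow> int) \<Rightarrow> (int \<Rightarrow> int) \<Rightarrow> (int \<Rightarrow> int) \<Rightarrow> young \<Rightarrow> young \<Rightarrow> (nat \<Rightarrow> nat) \<Rightarrow> enat" where
  "F_coeff_spec L M \<sigma> \<theta> \<mu> \<nu>p \<nu>m w =
     ecard {V. transition \<sigma> \<theta> \<mu> \<nu>p \<nu>m V \<and>
        (\<forall>i<L. (\<Sum>k<M. weight (M * L) \<sigma> \<theta> \<mu> \<nu>p \<nu>m V (i + k * L)) = w i)}"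

end

theory Submission
  imports Defs
begin

(* The defining condition of a transition of type (sigma, theta; mu, nu) at
   position j only involves the values sigma(theta j) and mu(theta j).  Hence the hypotheses
   sigma o theta = sigma' o theta' and mu o theta = empty_maya o theta' make the two families of
   transitions, their minimal elements and their weights literally the same.  What remains is
   to compare the weight with period L and the M weights with period M*L: the residue class
   i mod L is the disjoint union of the classes i + k*L mod M*L (k < M), so
     w_i^(L)(V) = sum_{k<M} w_{i+kL}^(ML)(V),
   provided the sums are over finite sets.  Finiteness holds because V and V_min both agree
   with the empty diagram outside a finite window; for this we must know that V_min is itself
   a transition.  We prove this by showing that the pointwise infimum of all transitions with
   empty boundary data is again a transition: pointwise infima of Young diagrams preserve being
   a Young diagram, interlacing, and commute with transposition. *)


section \<open>Pointwise infima of Young diagrams\<close>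

text \<open>The row-wise infimum of a family of Young diagrams (row lengths are natural numbers,
  so every nonempty family has a least element in each row).\<close>
definition finf :: "'a set \<Rightarrow> ('a \<Rightarrow> young) \<Rightarrow> young" where
  "finf I f = (\<lambda>r. Inf ((\<lambda>x. f x r) ` I))"

lemma finf_le: "x \<in> I \<Longrightarrow> finf I f r \<le> f x r"
  unfolding finf_def by (simp add: Inf_nat_def Least_le)

lemma finf_attained: "I \<noteq> {} \<Longrightarrow> \<exists>x\<in>I. finf I f r = f x r"
  unfolding finf_def using Inf_nat_def1[of "(\<lambda>x. f x r) ` I"] by auto

lemma less_finf_iff: "I \<noteq> {} \<Longrightarrow> (j < finf I f r) \<longleftrightarrow> (\<forall>x\<in>I. j < f x r)"
  using finf_le[of _ I f r] finf_attained[of I f r] by (metis order.strict_trans2)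

lemma young_antimono: "young lm \<Longrightarrow> i \<le> i' \<Longrightarrow> lm i' \<le> lm i"
  unfolding young_def by (metis lift_Suc_antimono_le)

lemma young_transpose_iff:
  assumes y: "young lm"
  shows "(j < lm i) \<longleftrightarrow> (i < ytranspose lm j)"
proof -
  let ?S = "{i. j < lm i}"
  have fin: "finite ?S"
    using y unfolding young_def by (auto elim: finite_subset[rotated])
  show ?thesis
  proof
    assume "j < lm i"
    then have "{..i} \<subseteq> ?S" using young_antimono[OF y] by (auto intro: order.strict_trans2)
    then have "card {..i} \<le> card ?S" using fin by (rule card_mono[rotated])
    then show "i < ytranspose lm j" unfolding ytranspose_def by simp
  next
    assume a: "i < ytranspose lm j"
    show "j < lm i"
    proof (rule ccontr)
      assume "\<not> j < lm i"
      then have "?S \<subseteq> {..<i}" using young_antimono[OF y]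
        by (auto simp: not_less) (metis leD le_trans linorder_le_less_linear)
      then have "card ?S \<le> i" using card_mono[of "{..<i}" ?S] by simp
      then show False using a unfolding ytranspose_def by simp
    qed
  qed
qed

lemma young_finf:
  assumes "I \<noteq> {}" and "\<forall>x\<in>I. young (f x)"
  shows "young (finf I f)"
proof -
  obtain x0 where x0: "x0 \<in> I" using assms by auto
  have "finf I f (Suc i) \<le> finf I f i" for i
  proof -
    obtain x where "x \<in> I" "finf I f i = f x i" using finf_attained[OF assms(1)] by blast
    then show ?thesis
      using finf_le[of x I f "Suc i"] assms(2) unfolding young_def by (metis le_trans)
  qed
  moreover have "{i. finf I f i \<noteq> 0} \<subseteq> {i. f x0 i \<noteq> 0}"
    using finf_le[OF x0, of f] by (metis (mono_tags, lifting) Collect_mono le_zero_eq)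
  then have "finite {i. finf I f i \<noteq> 0}"
    using assms(2) x0 unfolding young_def by (auto elim: finite_subset)
  ultimately show ?thesis unfolding young_def by blast
qed

lemma interlace_finf:
  assumes "I \<noteq> {}" and "\<forall>x\<in>I. interlace (f x) (g x)"
  shows "interlace (finf I f) (finf I g)"
  unfolding interlace_def
proof
  fix i
  obtain x where x: "x \<in> I" "finf I f i = f x i" using finf_attained[OF assms(1)] by blast
  obtain y where y: "y \<in> I" "finf I g i = g y i" using finf_attained[OF assms(1)] by blast
  have "finf I g i \<le> finf I f i"
    using x finf_le[of x I g i] assms(2) unfolding interlace_def by (metis le_trans)
  moreover have "finf I f (Suc i) \<le> finf I g i"
    using y finf_le[of y I f "Suc i"] assms(2) unfolding interlace_def by (metis le_trans)
  ultimately show "finf I g i \<le> finf I f i \<and> finf I f (Suc i) \<le> finf I g i" by simp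
qed

text \<open>Transposition commutes with infima; this reduces the case of the transposed
  interlacing relation to the plain one.\<close>
lemma ytranspose_finf:
  assumes "I \<noteq> {}" and "\<forall>x\<in>I. young (f x)"
  shows "ytranspose (finf I f) = finf I (\<lambda>x. ytranspose (f x))"
proof
  fix j
  have yf: "young (finf I f)" using young_finf[OF assms] .
  have "(i < ytranspose (finf I f) j) \<longleftrightarrow> (i < finf I (\<lambda>x. ytranspose (f x)) j)" for i
  proof -
    have "(i < ytranspose (finf I f) j) \<longleftrightarrow> j < finf I f i"
      using young_transpose_iff[OF yf] by simp
    also have "\<dots> \<longleftrightarrow> (\<forall>x\<in>I. j < f x i)" using less_finf_iff[OF assms(1)] by simp
    also have "\<dots> \<longleftrightarrow> (\<forall>x\<in>I. i < ytranspose (f x) j)" using young_transpose_iff assms(2) by blast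
    also have "\<dots> \<longleftrightarrow> i < finf I (\<lambda>x. ytranspose (f x)) j" using less_finf_iff[OF assms(1)] by simp
    finally show ?thesis .
  qed
  then show "ytranspose (finf I f) j = finf I (\<lambda>x. ytranspose (f x)) j"
    by (meson less_irrefl linorder_neqE_nat)
qed

lemma succ_s_finf:
  assumes "I \<noteq> {}" and "\<forall>x\<in>I. young (f x)" and "\<forall>x\<in>I. young (g x)"
    and "\<forall>x\<in>I. succ_s s (f x) (g x)"
  shows "succ_s s (finf I f) (finf I g)"
proof (cases "s = 1")
  case True
  then show ?thesis using assms interlace_finf unfolding succ_s_def by simp
next
  case False
  then have "\<forall>x\<in>I. interlace (ytranspose (f x)) (ytranspose (g x))"
    using assms(4) unfolding succ_s_def by simp
  then have "interlace (finf I (\<lambda>x. ytranspose (f x))) (finf I (\<lambda>x. ytranspose (g x)))"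
    by (rule interlace_finf[OF assms(1)])
  then show ?thesis using False ytranspose_finf[OF assms(1,2)] ytranspose_finf[OF assms(1,3)]
    unfolding succ_s_def by simp
qed

lemma finf_empty:
  assumes "x \<in> I" and "f x = empty_young"
  shows "finf I f = empty_young"
  using finf_le[OF assms(1), of f] assms(2) unfolding empty_young_def by fastforce


section \<open>The minimal transition\<close>

text \<open>The local condition imposed on a transition between the positions j and j+1, where
  eps = mu(theta j) decides the direction and s = sigma(theta j) the kind of interlacing.\<close>
definition edge_rel :: "int \<Rightarrow> int \<Rightarrow> young \<Rightarrow> young \<Rightarrow> bool" where
  "edge_rel \<epsilon> s a b \<longleftrightarrow> (if \<epsilon> = 1 then succ_s s a b else succ_s s b a)"

lemma transition_iff:
  "transition \<sigma> \<theta> \<mu> p m V \<longleftrightarrow>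
     (\<forall>n. young (V n)) \<and> (\<exists>N. \<forall>n<N. V n = m) \<and> (\<exists>N. \<forall>n>N. V n = p) \<and>
     (\<forall>j. edge_rel (\<mu> (\<theta> j)) (\<sigma> (\<theta> j)) (V j) (V (j + 1)))"
  unfolding transition_def edge_rel_def Let_def by simp

lemma edge_rel_finf:
  assumes "I \<noteq> {}" and "\<forall>x\<in>I. young (f x)" and "\<forall>x\<in>I. young (g x)"
    and "\<forall>x\<in>I. edge_rel \<epsilon> s (f x) (g x)"
  shows "edge_rel \<epsilon> s (finf I f) (finf I g)"
  using assms succ_s_finf[OF assms(1-3)] succ_s_finf[OF assms(1,3,2)]
  unfolding edge_rel_def by (cases "\<epsilon> = 1") simp_all

lemma transition_finf:
  assumes T: "transition \<sigma> \<theta> \<mu> empty_young empty_young W0"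
  defines "TS \<equiv> {W. transition \<sigma> \<theta> \<mu> empty_young empty_young W}"
  shows "transition \<sigma> \<theta> \<mu> empty_young empty_young (\<lambda>n. finf TS (\<lambda>W. W n))"
  unfolding transition_iff
proof (intro conjI allI)
  have ne: "TS \<noteq> {}" and W0: "W0 \<in> TS" using T unfolding TS_def by auto
  have young: "\<forall>W\<in>TS. young (W n)" for n unfolding TS_def transition_iff by blast
  show "young (finf TS (\<lambda>W. W n))" for n by (rule young_finf[OF ne young])
  obtain N1 where "\<forall>n<N1. W0 n = empty_young" using T unfolding transition_iff by blast
  then have "\<forall>n<N1. finf TS (\<lambda>W. W n) = empty_young" using finf_empty[OF W0] by simp
  then show "\<exists>N. \<forall>n<N. finf TS (\<lambda>W. W n) = empty_young" by blast
  obtain N2 where "\<forall>n>N2. W0 n = empty_young" using T unfolding transition_iff by blast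
  then have "\<forall>n>N2. finf TS (\<lambda>W. W n) = empty_young" using finf_empty[OF W0] by simp
  then show "\<exists>N. \<forall>n>N. finf TS (\<lambda>W. W n) = empty_young" by blast
  fix j
  have "\<forall>W\<in>TS. edge_rel (\<mu> (\<theta> j)) (\<sigma> (\<theta> j)) (W j) (W (j + 1))"
    unfolding TS_def transition_iff by blast
  then show "edge_rel (\<mu> (\<theta> j)) (\<sigma> (\<theta> j)) (finf TS (\<lambda>W. W j)) (finf TS (\<lambda>W. W (j + 1)))"
    by (rule edge_rel_finf[OF ne young young])
qed

text \<open>Existence of the minimal transition (for empty boundary data): it is the infimum of
  all transitions, so the definite description defining Vmin is well defined.\<close>
lemma Vmin_transition:
  assumes T: "transition \<sigma> \<theta> \<mu> empty_young empty_young W0"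
  shows "transition \<sigma> \<theta> \<mu> empty_young empty_young (Vmin \<sigma> \<theta> \<mu> empty_young empty_young)"
proof -
  let ?T = "transition \<sigma> \<theta> \<mu> empty_young empty_young"
  define V0 where "V0 = (\<lambda>n. finf {W. ?T W} (\<lambda>W. W n))"
  have V0: "?T V0" using transition_finf[OF T] unfolding V0_def .
  have V0_min: "\<forall>W. ?T W \<longrightarrow> (\<forall>n. ysubset (V0 n) (W n))"
    unfolding V0_def ysubset_def by (auto intro: finf_le)
  have "Vmin \<sigma> \<theta> \<mu> empty_young empty_young = V0"
    unfolding Vmin_def
  proof (rule the_equality)
    show "?T V0 \<and> (\<forall>W. ?T W \<longrightarrow> (\<forall>n. ysubset (V0 n) (W n)))" using V0 V0_min by blast
  next
    fix V assume "?T V \<and> (\<forall>W. ?T W \<longrightarrow> (\<forall>n. ysubset (V n) (W n)))"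
    then have "ysubset (V n) (V0 n)" and "ysubset (V0 n) (V n)" for n using V0 V0_min by blast+
    then show "V = V0" unfolding ysubset_def by (intro ext) (simp add: order_antisym)
  qed
  then show ?thesis using V0 by simp
qed

lemma transitions_differ_finitely:
  assumes "transition \<sigma> \<theta> \<mu> empty_young empty_young V"
    and "transition \<sigma>' \<theta>' \<mu>' empty_young empty_young W"
  shows "finite {n. V n \<noteq> W n}"
proof -
  obtain a b c d where "\<forall>n<a. V n = empty_young" "\<forall>n>b. V n = empty_young"
    "\<forall>n<c. W n = empty_young" "\<forall>n>d. W n = empty_young"
    using assms unfolding transition_iff by metis
  then have "{n. V n \<noteq> W n} \<subseteq> {min a c..max b d}" by force
  then show ?thesis by (rule finite_subset) simp
qed


section \<open>Refining residue classes\<close>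

lemma mod_mult_refine:
  fixes n :: int and L M i :: nat
  assumes "i < L" and "0 < M"
  shows "n mod int L = int i \<longleftrightarrow> (\<exists>k<M. n mod int (M * L) = int (i + k * L))"
proof -
  define m where "m = nat (n mod int (M * L))"
  have m_eq: "int m = n mod int (M * L)" and m_less: "m < M * L"
    unfolding m_def using assms by (simp_all add: nat_less_iff)
  have m_mod: "int m mod int L = n mod int L"
    unfolding m_eq by (simp add: mod_mod_cancel)
  show ?thesis
  proof
    assume "n mod int L = int i"
    hence "m mod L = i" using m_mod by (metis nat_int of_nat_mod)
    hence "m = i + m div L * L" by (metis mod_div_mult_eq)
    moreover have "m div L < M" using m_less by (simp add: less_mult_imp_div_less)
    ultimately show "\<exists>k<M. n mod int (M * L) = int (i + k * L)"
      using m_eq by metis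
  next
    assume "\<exists>k<M. n mod int (M * L) = int (i + k * L)"
    then obtain k where "int m = int (i + k * L)" using m_eq by metis
    hence "m = i + k * L" by (simp only: of_nat_eq_iff)
    hence "m mod L = i" using assms by simp
    thus "n mod int L = int i" using m_mod by (metis of_nat_mod)
  qed
qed

lemma sum_mod_refine:
  fixes f :: "int \<Rightarrow> 'a::comm_monoid_add" and L M i :: nat
  assumes fin: "finite {n. P n}" and "i < L" and "0 < M"
  shows "(\<Sum>n | n mod int L = int i \<and> P n. f n)
       = (\<Sum>k<M. \<Sum>n | n mod int (M * L) = int (i + k * L) \<and> P n. f n)"
proof -
  define A where "A k = {n. n mod int (M * L) = int (i + k * L) \<and> P n}" for k
  have "{n. n mod int L = int i \<and> P n} = (\<Union>k<M. A k)"
    unfolding A_def using mod_mult_refine[OF assms(2,3)] by blast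
  moreover have "finite (A k)" for k
    unfolding A_def using fin by (auto elim: finite_subset[rotated])
  moreover have "A k \<inter> A k' = {}" if "k \<noteq> k'" for k k'
    unfolding A_def using that assms(2) by auto
  ultimately show ?thesis
    by (simp add: sum.UNION_disjoint A_def)
qed

lemma weight_refine:
  assumes "transition \<sigma> \<theta> \<mu> empty_young empty_young V" and "i < L" and "0 < M"
  shows "weight L \<sigma> \<theta> \<mu> empty_young empty_young V i
       = (\<Sum>k<M. weight (M * L) \<sigma> \<theta> \<mu> empty_young empty_young V (i + k * L))"
  unfolding weight_def
  using sum_mod_refine[OF transitions_differ_finitely[OF assms(1) Vmin_transition[OF assms(1)]]
      assms(2,3)] .


section \<open>Invariance under reparametrisation\<close>

text \<open>A transition only sees the composites sigma o theta and mu o theta; therefore so do the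
  minimal transition and the weights.\<close>
lemma transition_data_cong:
  assumes "\<sigma> \<circ> \<theta> = \<sigma>' \<circ> \<theta>'" and "\<mu> \<circ> \<theta> = \<mu>' \<circ> \<theta>'"
  shows "transition \<sigma> \<theta> \<mu> = transition \<sigma>' \<theta>' \<mu>'"
    and "weight K \<sigma> \<theta> \<mu> = weight K \<sigma>' \<theta>' \<mu>'"
proof -
  have "\<sigma> (\<theta> j) = \<sigma>' (\<theta>' j)" "\<mu> (\<theta> j) = \<mu>' (\<theta>' j)" for j
    using assms by (metis comp_apply)+
  then show tr: "transition \<sigma> \<theta> \<mu> = transition \<sigma>' \<theta>' \<mu>'"
    unfolding transition_def by simp
  show "weight K \<sigma> \<theta> \<mu> = weight K \<sigma>' \<theta>' \<mu>'"
    unfolding weight_def[abs_def] Vmin_def[abs_def] tr ..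
qed


theorem mainTheorem3:
  fixes L M :: nat and \<sigma> \<theta> \<mu> \<sigma>' \<theta>' :: "int \<Rightarrow> int"
  assumes "L \<ge> 1" and "periodic L \<sigma>" and "affine_perm L \<theta>"
    and "maya \<mu>" and "charge \<mu> = 0"
    and "M \<ge> 1" and "periodic (M * L) \<sigma>'" and "affine_perm (M * L) \<theta>'"
    and "\<sigma> \<circ> \<theta> = \<sigma>' \<circ> \<theta>'" and "\<mu> \<circ> \<theta> = empty_maya \<circ> \<theta>'"
  shows "\<forall>w :: nat \<Rightarrow> nat.
           F_coeff L \<sigma> \<theta> \<mu> empty_young empty_young w
         = F_coeff_spec L M \<sigma>' \<theta>' empty_maya empty_young empty_young w"
proof
  fix w :: "nat \<Rightarrow> nat"
  let ?T = "transition \<sigma>' \<theta>' empty_maya empty_young empty_young"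
  let ?weight = "\<lambda>K. weight K \<sigma>' \<theta>' empty_maya empty_young empty_young"
  have "?weight L V i = (\<Sum>k<M. ?weight (M * L) V (i + k * L))" if "?T V" "i < L" for V i
    using weight_refine[OF that] assms(6) by simp
  then have "{V. ?T V \<and> (\<forall>i<L. ?weight L V i = w i)}
           = {V. ?T V \<and> (\<forall>i<L. (\<Sum>k<M. ?weight (M * L) V (i + k * L)) = w i)}"
    by auto
  then show "F_coeff L \<sigma> \<theta> \<mu> empty_young empty_young w
           = F_coeff_spec L M \<sigma>' \<theta>' empty_maya empty_young empty_young w"
    unfolding F_coeff_def F_coeff_spec_def transition_data_cong[OF assms(9,10)] by simp
qed

end
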